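(* Let $f_t(z)=z^2+t\in\mathbb{Q}(t)[z]$, and let $P_t\in\mathbb{Z}[t]$ be a monic polynomial. Then there exists a power series $F(z)\in\mathbb{Q}[[z]]$, convergent in a real neighbourhood of $0$ and satisfying $F(0)=0$, such that for all $t\in\mathbb{Q}$ with $|t|$ sufficiently large, \[\hat h_{f_t}(P_t)=\hat h_f(P)h(t)+F\!\left(\tfrac1t\right).\]
   Context: $h$ is the usual absolute logarithmic Weil height on $\mathbb{P}^1(\mathbb{Q})$. For $t\in\mathbb{Q}$, $\hat h_{f_t}(x)=\lim_{N\to\infty}2^{-N}h(f_t^N(x))$ is the canonical height of the specialized polynomial. Viewing $f\in K[z]$ and $P\in K$ with $K=\mathbb{Q}(t)$ the function field of $\mathbb{P}^1$, $\hat h_f(P)=\sum_{\beta\in\mathbb{P}^1(\overline{\mathbb{Q}})}\lim_{N\to\infty}2^{-N}\max\{0,-\operatorname{ord}_\beta(f^N(P))\}$. *)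

theory Defs
  imports "HOL-Analysis.Analysis" "HOL-Computational_Algebra.Computational_Algebra"
begin

definition weil_height :: "rat \<Rightarrow> real" where
  "weil_height q = (case quotient_of q of (a, b) \<Rightarrow> ln (real_of_int (max \<bar>a\<bar> \<bar>b\<bar>)))"

definition f_spec :: "rat \<Rightarrow> rat \<Rightarrow> rat" where
  "f_spec t x = x ^ 2 + t"

definition canon_height_spec :: "rat \<Rightarrow> rat \<Rightarrow> real" where
  "canon_height_spec t x = lim (\<lambda>N. weil_height ((f_spec t ^^ N) x) / 2 ^ N)"

text \<open>The map f(z) = z^2 + t over K = Q(t), acting on polynomial elements of K.\<close>
definition f_ff :: "rat poly \<Rightarrow> rat poly" where
  "f_ff Q = Q ^ 2 + [:0, 1:]"

text \<open>Local pole contribution max{0, -ord_beta(Q)} summed over all beta in P^1(Qbar),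
  for Q a polynomial in t: finite places contribute 0 (a polynomial has no finite poles),
  and at infinity -ord_infty(Q) = deg Q (and 0 for Q = 0).\<close>
definition pole_sum_poly :: "rat poly \<Rightarrow> nat" where
  "pole_sum_poly Q = degree Q"

definition canon_height_ff :: "rat poly \<Rightarrow> real" where
  "canon_height_ff P = lim (\<lambda>N. real (pole_sum_poly ((f_ff ^^ N) P)) / 2 ^ N)"

definition fps_eval_real :: "rat fps \<Rightarrow> real \<Rightarrow> real" where
  "fps_eval_real F x = (\<Sum>n. real_of_rat (fps_nth F n) * x ^ n)"

end

theory Submission
  imports Defs "HOL-Complex_Analysis.Complex_Analysis"
begin

text \<open>
Write \<open>P(t) = t^d W(1/t)\<close> with \<open>W\<close> the reflected polynomial, so \<open>W(0) = 1\<close>. Then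
\<open>f_t^N(P(t)) = t^(d 2^N) W_N(1/t)\<close>, where \<open>W_(N+1)(u) = W_N(u)^2 + u^(d 2^(N+1) - 1)\<close>, and
for \<open>t = a/b\<close> in lowest terms the orbit point has exact denominator \<open>b^(d 2^N)\<close>. For \<open>|t|\<close>
large the numerator dominates, so \<open>2^-N h(f_t^N(P(t))) = d h(t) + 2^-N log W_N(1/t)\<close>.
Since \<open>W_(N+1) = W_N^2 (1 + q_N)\<close> with \<open>q_N(u) = O(u^(N+1))\<close>, the function
\<open>2^-N log W_N\<close> converges uniformly near \<open>0\<close> to the holomorphic function
\<open>log W_0 + \<Sum> 2^-(i+1) log (1 + q_i)\<close>. Its Taylor coefficients are rational, because
up to order \<open>d 2^(N+1) - 1\<close> they agree with those of the partial sum, a rational power series.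
A constant \<open>P\<close> is reduced to \<open>f(P) = 1 + t\<close>, which halves both heights.
\<close>

subsection \<open>Denominators along the orbit\<close>

lemma quotient_of_int_div:
  assumes "D > 0" "coprime A D"
  shows "quotient_of (rat_of_int A / rat_of_int D) = (A, D)"
  using assms by (simp add: Fract_of_int_quotient[symmetric] quotient_of_Fract)

lemma weil_height_int_div:
  assumes "D > 0" "coprime A D"
  shows "weil_height (rat_of_int A / rat_of_int D)
           = ln (real_of_int D) + ln (max \<bar>real_of_rat (rat_of_int A / rat_of_int D)\<bar> 1)"
proof -
  have D: "real_of_int D > 0" using assms by simp
  have "max \<bar>real_of_int A\<bar> (real_of_int D) = real_of_int D * max (\<bar>real_of_int A\<bar> / real_of_int D) 1"
    using D by (simp add: max_mult_distrib_left)
  moreover have "\<bar>real_of_int A / real_of_int D\<bar> = \<bar>real_of_int A\<bar> / real_of_int D" using D by simp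
  ultimately have "ln (max \<bar>real_of_int A\<bar> (real_of_int D))
      = ln (real_of_int D) + ln (max \<bar>real_of_int A / real_of_int D\<bar> 1)"
    using D by (simp add: ln_mult)
  moreover have "real_of_int (max \<bar>A\<bar> D) = max \<bar>real_of_int A\<bar> (real_of_int D)"
    by (simp add: max_def) linarith
  ultimately show ?thesis using assms
    by (simp add: weil_height_def quotient_of_int_div of_rat_divide)
qed

lemma coprime_if_dvd_diff:
  fixes x z b :: int
  assumes "coprime x b" "b dvd z - x"
  shows "coprime z b"
proof (rule coprimeI)
  fix d assume d: "d dvd z" "d dvd b"
  have "d dvd z - x" using d(2) assms(2) by (rule dvd_trans)
  with d(1) have "d dvd z - (z - x)" by (rule dvd_diff)
  then have "d dvd x" by simp
  then show "is_unit d" using assms(1) d(2) coprime_common_divisor by blast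
qed

lemma poly_int_div_times_power:
  fixes p :: "int poly" and a b :: int
  assumes "b \<noteq> 0"
  shows "\<exists>B. poly (map_poly rat_of_int p) (rat_of_int a / rat_of_int b) * rat_of_int b ^ degree p
               = rat_of_int B \<and> b dvd B - lead_coeff p * a ^ degree p"
proof (induction p)
  case 0
  then show ?case by auto
next
  case (pCons c q)
  show ?case
  proof (cases "q = 0")
    case True
    then show ?thesis by (intro exI[of _ c]) (simp add: map_poly_pCons)
  next
    case False
    obtain B where B: "poly (map_poly rat_of_int q) (rat_of_int a / rat_of_int b) * rat_of_int b ^ degree q
                         = rat_of_int B"
        "b dvd B - lead_coeff q * a ^ degree q"
      using pCons.IH by blast
    have "poly (map_poly rat_of_int (pCons c q)) (rat_of_int a / rat_of_int b) * rat_of_int b ^ degree (pCons c q)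
        = rat_of_int c * rat_of_int b ^ Suc (degree q)
          + rat_of_int a * (poly (map_poly rat_of_int q) (rat_of_int a / rat_of_int b) * rat_of_int b ^ degree q)"
      using assms False by (simp add: map_poly_pCons algebra_simps)
    also have "\<dots> = rat_of_int (c * b ^ Suc (degree q) + a * B)"
      by (simp only: B(1)) simp
    finally have "poly (map_poly rat_of_int (pCons c q)) (rat_of_int a / rat_of_int b) * rat_of_int b ^ degree (pCons c q)
        = rat_of_int (c * b ^ Suc (degree q) + a * B)" .
    moreover have "b dvd c * b ^ Suc (degree q) + a * B - lead_coeff (pCons c q) * a ^ degree (pCons c q)"
    proof -
      have "c * b ^ Suc (degree q) + a * B - lead_coeff (pCons c q) * a ^ degree (pCons c q)
         = b * (c * b ^ degree q) + a * (B - lead_coeff q * a ^ degree q)"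
        using False by (simp add: algebra_simps)
      moreover have "b dvd b * (c * b ^ degree q) + a * (B - lead_coeff q * a ^ degree q)"
        using B(2) by simp
      ultimately show ?thesis by argo
    qed
    ultimately show ?thesis by blast
  qed
qed

lemma monic_poly_int_div:
  fixes p :: "int poly"
  assumes "lead_coeff p = 1" and "quotient_of t = (a, b)"
  shows "\<exists>A. poly (map_poly rat_of_int p) t = rat_of_int A / rat_of_int b ^ degree p \<and> coprime A b"
proof -
  have b: "b > 0" using assms(2) by (rule quotient_of_denom_pos)
  have t: "t = rat_of_int a / rat_of_int b" using assms(2) by (rule quotient_of_div)
  obtain B where B: "poly (map_poly rat_of_int p) t * rat_of_int b ^ degree p = rat_of_int B"
      "b dvd B - a ^ degree p"
    using poly_int_div_times_power[of b p a] b assms(1) t by auto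
  have "poly (map_poly rat_of_int p) t = rat_of_int B / rat_of_int b ^ degree p"
    using B(1) b by (simp add: eq_divide_eq)
  moreover have "coprime B b"
    using coprime_if_dvd_diff[of "a ^ degree p" b B] quotient_of_coprime[OF assms(2)] B(2) by simp
  ultimately show ?thesis by blast
qed

definition orbit_exp :: "nat \<Rightarrow> nat \<Rightarrow> nat" where
  "orbit_exp k N = k * 2 ^ Suc N - 1"

lemma orbit_exp_plus_1:
  assumes "k \<ge> 1"
  shows "orbit_exp k N + 1 = 2 * (k * 2 ^ N)"
proof -
  have "k * 2 ^ Suc N \<ge> 1" using assms by (simp add: Suc_le_eq)
  then show ?thesis unfolding orbit_exp_def by simp
qed

lemma Suc_le_orbit_exp:
  assumes "k \<ge> 1"
  shows "Suc N \<le> orbit_exp k N"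
proof -
  have "Suc N < 2 ^ Suc N" by (rule less_exp)
  also have "2 ^ Suc N \<le> k * 2 ^ Suc N" using assms by simp
  finally show ?thesis unfolding orbit_exp_def by linarith
qed

lemma orbit_exp_Suc: "k \<ge> 1 \<Longrightarrow> orbit_exp k (Suc N) = 2 * orbit_exp k N + 1"
  using orbit_exp_plus_1[of k N] orbit_exp_plus_1[of k "Suc N"] by simp

lemma orbit_exp_add_le: "k \<ge> 1 \<Longrightarrow> orbit_exp k N + i \<le> orbit_exp k (i + N)"
  by (induction i) (auto simp: orbit_exp_Suc)

fun orbit_fun :: "nat \<Rightarrow> rat poly \<Rightarrow> nat \<Rightarrow> 'a::field_char_0 \<Rightarrow> 'a" where
  "orbit_fun k W0 0 u = poly (map_poly of_rat W0) u"
| "orbit_fun k W0 (Suc N) u = orbit_fun k W0 N u ^ 2 + u ^ orbit_exp k N"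

lemma of_rat_poly_eval:
  "(of_rat (poly p x) :: 'a::field_char_0) = poly (map_poly of_rat p) (of_rat x)"
  by (induction p) (simp_all add: map_poly_pCons of_rat_add of_rat_mult)

lemma of_rat_orbit_fun: "(of_rat (orbit_fun k W0 N x) :: 'a::field_char_0) = orbit_fun k W0 N (of_rat x)"
  by (induction N) (simp_all add: of_rat_poly_eval of_rat_add of_rat_power)

lemma orbit_fun_0:
  assumes "k \<ge> 1" "coeff W0 0 = 1"
  shows "orbit_fun k W0 N 0 = 1"
proof (induction N)
  case 0
  then show ?case using assms(2) by (simp add: poly_0_coeff_0 coeff_map_poly)
next
  case (Suc N)
  then show ?case using Suc_le_orbit_exp[OF assms(1), of N] by simp
qed

lemma funpow_f_spec_dehomogenized:
  assumes "t \<noteq> 0" "k \<ge> 1" "z = t ^ k * poly W0 (1 / t)"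
  shows "(f_spec t ^^ N) z = t ^ (k * 2 ^ N) * orbit_fun k W0 N (1 / t)"
proof (induction N)
  case 0
  then show ?case using assms by simp
next
  case (Suc N)
  have "t ^ (k * 2 ^ Suc N) * (1 / t) ^ orbit_exp k N = t"
  proof -
    have "t ^ (k * 2 ^ Suc N) = t ^ (orbit_exp k N + 1)"
      using orbit_exp_plus_1[OF assms(2)] by (simp add: mult_ac)
    then show ?thesis using assms(1) by (simp add: power_add power_one_over field_simps)
  qed
  then show ?case using Suc
    by (simp add: f_spec_def power_mult_distrib algebra_simps power2_eq_square power_add mult_2)
qed

lemma funpow_f_spec_denominator:
  assumes "quotient_of t = (a, b)" "k \<ge> 1" "z = rat_of_int A0 / rat_of_int b ^ k" "coprime A0 b"
  shows "\<exists>A. (f_spec t ^^ N) z = rat_of_int A / rat_of_int b ^ (k * 2 ^ N) \<and> coprime A b"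
proof (induction N)
  case 0
  then show ?case using assms by auto
next
  case (Suc N)
  then obtain A where A: "(f_spec t ^^ N) z = rat_of_int A / rat_of_int b ^ (k * 2 ^ N)" "coprime A b"
    by blast
  define m where "m = k * 2 ^ N"
  have m1: "m \<ge> 1" using assms(2) by (simp add: m_def)
  then have m: "2 * m = Suc (2 * m - 1)" by simp
  have b: "rat_of_int b \<noteq> 0" using quotient_of_denom_pos[OF assms(1)] by simp
  have t: "t = rat_of_int a / rat_of_int b" using assms(1) by (rule quotient_of_div)
  have "(f_spec t ^^ Suc N) z = (rat_of_int A / rat_of_int b ^ m) ^ 2 + rat_of_int a / rat_of_int b"
    using A(1) t by (simp add: f_spec_def m_def)
  also have "\<dots> = rat_of_int (A ^ 2 + a * b ^ (2 * m - 1)) / rat_of_int b ^ (k * 2 ^ Suc N)"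
  proof -
    have "rat_of_int b ^ (2 * m) = rat_of_int b * rat_of_int b ^ (2 * m - 1)"
      by (subst m) simp
    then show ?thesis using b
      by (simp add: m_def field_simps power2_eq_square power_mult_distrib flip: power_add mult_2)
  qed
  finally have "(f_spec t ^^ Suc N) z = rat_of_int (A ^ 2 + a * b ^ (2 * m - 1)) / rat_of_int b ^ (k * 2 ^ Suc N)" .
  moreover have "coprime (A ^ 2 + a * b ^ (2 * m - 1)) b"
  proof (rule coprime_if_dvd_diff)
    show "coprime (A ^ 2) b" using A(2) by simp
    have "2 * m - 1 > 0" using m1 by simp
    then have "b dvd b ^ (2 * m - 1)" by (simp add: dvd_power)
    then show "b dvd A ^ 2 + a * b ^ (2 * m - 1) - A ^ 2" by simp
  qed
  ultimately show ?case by blast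
qed

lemma ln_3_gt_1: "ln (3::real) > 1"
proof -
  have "exp 1 < (3::real)" using e_less_272 by simp
  then have "ln (exp 1) < ln (3::real)" by (subst ln_less_cancel_iff) auto
  then show ?thesis by simp
qed

lemma weil_height_funpow_f_spec:
  assumes k: "k \<ge> 1" and q: "quotient_of t = (a, b)" and t3: "3 \<le> \<bar>real_of_rat t\<bar>"
    and z: "z = rat_of_int A0 / rat_of_int b ^ k" "coprime A0 b" "z = t ^ k * poly W0 (1 / t)"
    and w_pos: "orbit_fun k W0 N (1 / real_of_rat t) > 0"
    and w_bound: "\<bar>ln (orbit_fun k W0 N (1 / real_of_rat t)) / 2 ^ N\<bar> \<le> 1"
  shows "weil_height ((f_spec t ^^ N) z) / 2 ^ N
           = real k * weil_height t + ln (orbit_fun k W0 N (1 / real_of_rat t)) / 2 ^ N"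
proof -
  have b: "b > 0" using q by (rule quotient_of_denom_pos)
  define m where "m = k * 2 ^ N"
  define w where "w = orbit_fun k W0 N (1 / real_of_rat t)"
  define T where "T = real_of_rat t"
  have T0: "T \<noteq> 0" and T3: "3 \<le> \<bar>T\<bar>" using t3 by (auto simp: T_def)
  obtain A where A: "(f_spec t ^^ N) z = rat_of_int A / rat_of_int b ^ m" "coprime A b"
    using funpow_f_spec_denominator[OF q k z(1,2)] by (auto simp: m_def)
  have "(f_spec t ^^ N) z = t ^ m * orbit_fun k W0 N (1 / t)"
    using funpow_f_spec_dehomogenized[OF _ k z(3)] T0 by (simp add: m_def T_def)
  then have zr: "real_of_rat ((f_spec t ^^ N) z) = T ^ m * w"
    by (simp add: w_def T_def of_rat_mult of_rat_power of_rat_orbit_fun of_rat_divide del: orbit_fun.simps)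
  have "weil_height ((f_spec t ^^ N) z)
      = ln (real_of_int (b ^ m)) + ln (max \<bar>real_of_rat ((f_spec t ^^ N) z)\<bar> 1)"
    using weil_height_int_div[of "b ^ m" A] A b by simp
  then have hz: "weil_height ((f_spec t ^^ N) z) = real m * ln (real_of_int b) + ln (max \<bar>T ^ m * w\<bar> 1)"
    using b zr by (simp add: ln_realpow)
  have ht: "weil_height t = ln (real_of_int b) + ln \<bar>T\<bar>"
    using weil_height_int_div[of b a] b T3 quotient_of_coprime[OF q] quotient_of_div[OF q]
    by (simp add: T_def)
  have w: "w > 0" using w_pos by (simp add: w_def)
  have ln_zr: "ln \<bar>T ^ m * w\<bar> = real m * ln \<bar>T\<bar> + ln w"
    using w T0 by (simp add: abs_mult power_abs ln_mult ln_realpow)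
  txt \<open>\<open>|t| \<ge> 3 > e\<close> and \<open>log w \<ge> -2^N\<close> make the numerator dominate the denominator.\<close>
  have "real m * ln \<bar>T\<bar> + ln w \<ge> 0"
  proof -
    have "ln \<bar>T\<bar> \<ge> ln 3" using T3 by simp
    then have "ln \<bar>T\<bar> \<ge> 1" using ln_3_gt_1 by linarith
    then have "real m * ln \<bar>T\<bar> \<ge> real m" by (simp add: mult_le_cancel_left1)
    moreover have "ln w \<ge> - (2 ^ N)" using w_bound by (simp add: w_def abs_le_iff field_simps del: orbit_fun.simps)
    moreover have "real m \<ge> 2 ^ N" using k by (simp add: m_def)
    ultimately show ?thesis by linarith
  qed
  then have "\<bar>T ^ m * w\<bar> \<ge> 1" using ln_zr w T0 ln_ge_zero_iff[of "\<bar>T ^ m * w\<bar>"] by simp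
  then have "weil_height ((f_spec t ^^ N) z) = real m * ln (real_of_int b) + real m * ln \<bar>T\<bar> + ln w"
    using hz ln_zr by simp
  then show ?thesis unfolding ht w_def[symmetric] by (simp add: m_def field_simps)
qed

subsection \<open>Power series with rational coefficients\<close>

definition fps_rational :: "complex fps \<Rightarrow> bool" where
  "fps_rational F \<longleftrightarrow> (\<forall>n. F $ n \<in> \<rat>)"

lemma fps_rational_add: "fps_rational F \<Longrightarrow> fps_rational G \<Longrightarrow> fps_rational (F + G)"
  unfolding fps_rational_def by auto

lemma fps_rational_diff: "fps_rational F \<Longrightarrow> fps_rational G \<Longrightarrow> fps_rational (F - G)"
  unfolding fps_rational_def by auto

lemma fps_rational_mult: "fps_rational F \<Longrightarrow> fps_rational G \<Longrightarrow> fps_rational (F * G)"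
  unfolding fps_rational_def by (auto simp: fps_mult_nth intro!: Rats_sum Rats_mult)

lemma fps_rational_1: "fps_rational 1"
  unfolding fps_rational_def by (simp add: fps_one_nth)

lemma fps_rational_power: "fps_rational F \<Longrightarrow> fps_rational (F ^ n)"
  by (induction n) (auto intro: fps_rational_mult fps_rational_1)

lemma fps_rational_const: "c \<in> \<rat> \<Longrightarrow> fps_rational (fps_const c)"
  unfolding fps_rational_def by (simp add: fps_const_def)

lemma fps_rational_X_power: "fps_rational (fps_X ^ n)"
  unfolding fps_rational_def by simp

lemma fps_rational_of_poly: "fps_rational (fps_of_poly (map_poly of_rat p))"
  unfolding fps_rational_def by (simp add: coeff_map_poly)

lemma fps_rational_inverse:
  assumes "fps_rational F" "fps_nth F 0 \<noteq> 0"
  shows "fps_rational (inverse F)"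
  unfolding fps_rational_def
proof
  fix n
  show "inverse F $ n \<in> \<rat>"
  proof (induction n rule: less_induct)
    case (less n)
    show ?case
    proof (cases n)
      case 0
      then show ?thesis using assms by (auto simp: fps_rational_def)
    next
      case (Suc m)
      have "(F * inverse F) $ n = 0" using inverse_mult_eq_1'[OF assms(2)] Suc by simp
      moreover have "(F * inverse F) $ n = F $ 0 * inverse F $ n + (\<Sum>i=1..n. F $ i * inverse F $ (n - i))"
        using Suc by (simp add: fps_mult_nth sum.atLeast_Suc_atMost)
      ultimately have eq: "inverse F $ n = - (\<Sum>i=1..n. F $ i * inverse F $ (n - i)) / F $ 0"
        using assms(2) by (simp add: field_simps add_eq_0_iff)
      have "(\<Sum>i=1..n. F $ i * inverse F $ (n - i)) \<in> \<rat>"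
        using less.IH assms(1) by (intro Rats_sum) (auto simp: fps_rational_def)
      then show ?thesis using eq assms(1) unfolding fps_rational_def by (auto intro!: Rats_divide)
    qed
  qed
qed

lemma fps_rational_compose:
  assumes "fps_rational F" "fps_rational G"
  shows "fps_rational (fps_compose F G)"
proof -
  have "fps_rational (G ^ i)" for i using assms(2) by (rule fps_rational_power)
  then show ?thesis using assms(1)
    by (auto simp: fps_compose_nth fps_rational_def intro!: Rats_sum Rats_mult)
qed

lemma fps_rational_fps_ln: "fps_rational (fps_ln 1)"
  unfolding fps_rational_def by (auto simp: fps_ln_nth intro!: Rats_divide Rats_power)

lemma Ln_one_plus_has_fps_expansion: "(\<lambda>z. Ln (1 + z)) has_fps_expansion fps_ln 1"
proof (rule has_fps_expansionI)
  have "(-1) ^ Suc n / of_nat n = fps_ln (1::complex) $ n" for n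
    by (cases n) (simp_all add: fps_ln_nth)
  moreover have "eventually (\<lambda>z::complex. z \<in> ball 0 1) (nhds 0)"
    by (intro eventually_nhds_in_open) auto
  ultimately show "eventually (\<lambda>u. (\<lambda>n. fps_ln 1 $ n * u ^ n) sums Ln (1 + u)) (nhds 0)"
    using Ln_series by (auto elim!: eventually_mono)
qed

subsection \<open>The function field height\<close>

lemma degree_funpow_f_ff: "degree Q \<ge> 1 \<Longrightarrow> degree ((f_ff ^^ N) Q) = degree Q * 2 ^ N"
proof (induction N)
  case 0
  then show ?case by simp
next
  case (Suc N)
  define R where "R = (f_ff ^^ N) Q"
  have R: "degree R = degree Q * 2 ^ N" using Suc by (simp add: R_def)
  then have R1: "degree R \<ge> 1" using Suc.prems by simp
  then have "R \<noteq> 0" by auto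
  then have "degree (R ^ 2) = 2 * degree R" by (simp add: degree_power_eq)
  moreover have "degree [:0, 1::rat:] < degree (R ^ 2)" using calculation R1 by simp
  ultimately have "degree (R ^ 2 + [:0, 1:]) = 2 * degree R" by (simp add: degree_add_eq_left)
  moreover have "(f_ff ^^ Suc N) Q = R ^ 2 + [:0, 1:]" by (simp add: R_def f_ff_def)
  ultimately show ?case using R by (simp add: mult_ac)
qed

lemma canon_height_ff_eq_degree: "degree Q \<ge> 1 \<Longrightarrow> canon_height_ff Q = real (degree Q)"
  unfolding canon_height_ff_def pole_sum_poly_def by (simp add: degree_funpow_f_ff limI)

lemma canon_height_ff_1: "canon_height_ff 1 = 1 / 2"
proof -
  have "f_ff 1 = [:1, 1:]" unfolding f_ff_def power_one by (simp add: one_pCons)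
  then have "(f_ff ^^ Suc N) 1 = (f_ff ^^ N) [:1, 1:]" for N
    by (metis funpow_Suc_right comp_apply)
  then have Suc_eq: "real (pole_sum_poly ((f_ff ^^ Suc N) 1)) / 2 ^ Suc N = 1 / 2" for N
    using degree_funpow_f_ff[of "[:1, 1::rat:]" N] by (simp add: pole_sum_poly_def)
  have "(\<lambda>N. real (pole_sum_poly ((f_ff ^^ N) 1)) / 2 ^ N) \<longlonglongrightarrow> 1 / 2"
    by (rule LIMSEQ_imp_Suc) (unfold Suc_eq, rule tendsto_const)
  then show ?thesis unfolding canon_height_ff_def by (rule limI)
qed

subsection \<open>The limit of \<open>2^-N log W_N\<close> as a holomorphic function\<close>

text \<open>\<open>W_(N+1) = W_N^2 (1 + q_N)\<close> for the ratio \<open>q_N\<close> below, so \<open>orbit_log_partial k W0 N\<close>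
  is a logarithm of \<open>W_N\<close> divided by \<open>2^N\<close>.\<close>

definition orbit_ratio :: "nat \<Rightarrow> rat poly \<Rightarrow> nat \<Rightarrow> complex \<Rightarrow> complex" where
  "orbit_ratio k W0 N u = u ^ orbit_exp k N * inverse (orbit_fun k W0 N u ^ 2)"

definition orbit_log_term :: "nat \<Rightarrow> rat poly \<Rightarrow> nat \<Rightarrow> complex \<Rightarrow> complex" where
  "orbit_log_term k W0 N u = Ln (1 + orbit_ratio k W0 N u) / 2 ^ Suc N"

definition orbit_log_partial :: "nat \<Rightarrow> rat poly \<Rightarrow> nat \<Rightarrow> complex \<Rightarrow> complex" where
  "orbit_log_partial k W0 N u = Ln (orbit_fun k W0 0 u) + (\<Sum>i<N. orbit_log_term k W0 i u)"

definition orbit_log :: "nat \<Rightarrow> rat poly \<Rightarrow> complex \<Rightarrow> complex" where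
  "orbit_log k W0 u = Ln (orbit_fun k W0 0 u) + (\<Sum>i. orbit_log_term k W0 i u)"

fun orbit_fps :: "nat \<Rightarrow> rat poly \<Rightarrow> nat \<Rightarrow> complex fps" where
  "orbit_fps k W0 0 = fps_of_poly (map_poly of_rat W0)"
| "orbit_fps k W0 (Suc N) = orbit_fps k W0 N ^ 2 + fps_X ^ orbit_exp k N"

definition orbit_ratio_fps :: "nat \<Rightarrow> rat poly \<Rightarrow> nat \<Rightarrow> complex fps" where
  "orbit_ratio_fps k W0 N = fps_X ^ orbit_exp k N * inverse (orbit_fps k W0 N ^ 2)"

definition orbit_log_partial_fps :: "nat \<Rightarrow> rat poly \<Rightarrow> nat \<Rightarrow> complex fps" where
  "orbit_log_partial_fps k W0 N = fps_compose (fps_ln 1) (orbit_fps k W0 0 - 1)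
     + (\<Sum>i<N. fps_compose (fps_ln 1) (orbit_ratio_fps k W0 i) * fps_const (1 / 2 ^ Suc i))"

lemma orbit_fun_holomorphic: "(\<lambda>u. orbit_fun k W0 N u) holomorphic_on A"
  by (induction N) (auto intro!: holomorphic_intros)

lemma orbit_fun_has_fps_expansion: "(\<lambda>u. orbit_fun k W0 N u) has_fps_expansion orbit_fps k W0 N"
proof (induction N)
  case 0
  have "eval_fps (fps_of_poly (map_poly (of_rat :: rat \<Rightarrow> complex) W0))
          has_fps_expansion fps_of_poly (map_poly of_rat W0)"
    by (intro eval_fps_has_fps_expansion) simp
  then show ?case by (simp add: eval_fps_of_poly[abs_def])
next
  case (Suc N)
  then show ?case by (auto intro!: fps_expansion_intros)
qed

lemma fps_rational_orbit_fps: "fps_rational (orbit_fps k W0 N)"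
  by (induction N) (auto intro!: fps_rational_add fps_rational_power fps_rational_X_power fps_rational_of_poly)

lemma not_nonpos_Reals_if_near_1: "norm (z - 1) < 1 \<Longrightarrow> (z::complex) \<notin> \<real>\<^sub>\<le>\<^sub>0"
  using abs_Re_le_cmod[of "z - 1"] by (auto simp: complex_nonpos_Reals_iff)

lemma norm_Ln_one_plus_div_le:
  fixes q :: complex
  assumes "norm q < 1/2"
  shows "norm (Ln (1 + q) / 2 ^ Suc N) \<le> norm q"
proof -
  have "norm (Ln (1 + q) / 2 ^ Suc N) = norm (Ln (1 + q)) / 2 ^ Suc N" by (simp add: norm_divide norm_power)
  also have "\<dots> \<le> 2 * norm q / 2 ^ Suc N" using norm_Ln_le[OF assms] by (intro divide_right_mono) auto
  also have "\<dots> \<le> norm q"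
  proof -
    have "norm q * 1 \<le> norm q * 2 ^ N" by (intro mult_left_mono) auto
    then show ?thesis by (simp add: field_simps)
  qed
  finally show ?thesis .
qed

lemma exp_1_sum_powers_le:
  fixes x :: real
  assumes "0 \<le> x" "x \<le> 1/8"
  shows "(\<Sum>j<N. exp 1 * x ^ Suc j) \<le> 2/5"
proof -
  have "(\<Sum>j<N. x ^ Suc j) = x * ((1 - x ^ N) / (1 - x))"
    using assms by (simp add: sum_distrib_left[symmetric] sum_gp_strict)
  also have "\<dots> \<le> x * (1 / (1 - x))"
    using assms by (intro mult_left_mono divide_right_mono) auto
  also have "\<dots> \<le> 1/7" using assms by (simp add: field_simps)
  finally have "(\<Sum>j<N. x ^ Suc j) \<le> 1/7" .
  then have "exp 1 * (\<Sum>j<N. x ^ Suc j) \<le> (272/100) * (1/7)"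
    using e_less_272 assms(1) by (intro mult_mono) (auto intro!: sum_nonneg)
  then show ?thesis by (simp add: sum_distrib_left)
qed

text \<open>If \<open>w = exp (2^N p)\<close> with \<open>|p| \<le> 1\<close>, then \<open>|w|^-2 \<le> e^(2^(N+1)) \<le> e^(orbit_exp k N + 1)\<close>.\<close>

lemma norm_power_orbit_exp_div_le:
  fixes u w p :: complex
  assumes k: "k \<ge> 1" and w: "exp (2 ^ N * p) = w" and p: "norm p \<le> 1"
  shows "norm (u ^ orbit_exp k N * inverse (w ^ 2)) \<le> exp 1 * (exp 1 * norm u) ^ orbit_exp k N"
proof -
  have "norm (2 ^ N * p) \<le> 2 ^ N" using p by (simp add: norm_mult norm_power mult_left_le)
  then have "- (2 ^ N) \<le> Re (2 ^ N * p)" using abs_Re_le_cmod[of "2 ^ N * p"] by linarith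
  then have "exp (- (2 ^ N)) \<le> norm w" unfolding w[symmetric] norm_exp_eq_Re by simp
  then have "inverse (norm w ^ 2) \<le> inverse (exp (- (2 ^ N)) ^ 2)"
    by (intro le_imp_inverse_le power_mono) auto
  also have "\<dots> = exp (2 ^ Suc N)" by (simp add: exp_minus power2_eq_square exp_add[symmetric])
  also have "\<dots> \<le> exp (real (orbit_exp k N + 1))"
    using orbit_exp_plus_1[OF k, of N] k by (simp del: of_nat_add)
  also have "\<dots> = exp 1 * exp 1 ^ orbit_exp k N"
    by (simp add: exp_add exp_of_nat_mult[symmetric] mult.commute)
  finally have "norm (inverse (w ^ 2)) \<le> exp 1 * exp 1 ^ orbit_exp k N" by (simp add: norm_inverse norm_power)
  then have "norm (u ^ orbit_exp k N * inverse (w ^ 2)) \<le> norm u ^ orbit_exp k N * (exp 1 * exp 1 ^ orbit_exp k N)"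
    by (simp add: norm_mult norm_power mult_left_mono)
  then show ?thesis by (simp add: power_mult_distrib mult_ac)
qed

locale dehomogenized_orbit =
  fixes k :: nat and W0 :: "rat poly"
  assumes k_pos: "k \<ge> 1" and W0_0: "coeff W0 0 = 1"
begin

lemma orbit_exp_neq_0: "orbit_exp k N \<noteq> 0"
  using Suc_le_orbit_exp[OF k_pos, of N] by simp

lemma orbit_fps_nth_0: "orbit_fps k W0 N $ 0 = 1"
  using has_fps_expansion_imp_0_eq_fps_nth_0[OF orbit_fun_has_fps_expansion[of k W0 N]]
    orbit_fun_0[OF k_pos W0_0] by metis

lemma orbit_ratio_has_fps_expansion: "orbit_ratio k W0 N has_fps_expansion orbit_ratio_fps k W0 N"
proof -
  have "(\<lambda>u. u ^ orbit_exp k N * inverse (orbit_fun k W0 N u ^ 2))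
          has_fps_expansion fps_X ^ orbit_exp k N * inverse (orbit_fps k W0 N ^ 2)"
    by (intro fps_expansion_intros orbit_fun_has_fps_expansion) (simp add: orbit_fps_nth_0)
  then show ?thesis by (simp add: orbit_ratio_def[abs_def] orbit_ratio_fps_def)
qed

lemma orbit_ratio_fps_nth_0: "orbit_ratio_fps k W0 N $ 0 = 0"
  using orbit_exp_neq_0[of N] by (simp add: orbit_ratio_fps_def fps_mult_nth)

lemma fps_rational_orbit_ratio_fps: "fps_rational (orbit_ratio_fps k W0 N)"
  unfolding orbit_ratio_fps_def
  by (intro fps_rational_mult fps_rational_X_power fps_rational_inverse fps_rational_power
      fps_rational_orbit_fps) (simp add: orbit_fps_nth_0)

lemma orbit_log_term_has_fps_expansion:
  "orbit_log_term k W0 i has_fps_expansion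
     fps_compose (fps_ln 1) (orbit_ratio_fps k W0 i) * fps_const (1 / 2 ^ Suc i)"
proof -
  have "(\<lambda>u. ((\<lambda>z. Ln (1 + z)) \<circ> orbit_ratio k W0 i) u * (1 / 2 ^ Suc i)) has_fps_expansion
          fps_compose (fps_ln 1) (orbit_ratio_fps k W0 i) * fps_const (1 / 2 ^ Suc i)"
    by (intro has_fps_expansion_cmult_right has_fps_expansion_compose Ln_one_plus_has_fps_expansion
        orbit_ratio_has_fps_expansion orbit_ratio_fps_nth_0)
  then show ?thesis by (simp add: orbit_log_term_def[abs_def])
qed

lemma orbit_log_partial_has_fps_expansion:
  "orbit_log_partial k W0 N has_fps_expansion orbit_log_partial_fps k W0 N"
proof -
  have "(\<lambda>u. ((\<lambda>z. Ln (1 + z)) \<circ> (\<lambda>u. orbit_fun k W0 0 u - 1)) u) has_fps_expansion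
          fps_compose (fps_ln 1) (orbit_fps k W0 0 - 1)"
    by (intro has_fps_expansion_compose Ln_one_plus_has_fps_expansion has_fps_expansion_diff
        orbit_fun_has_fps_expansion has_fps_expansion_1) (simp add: coeff_map_poly W0_0)
  then have "(\<lambda>u. ((\<lambda>z. Ln (1 + z)) \<circ> (\<lambda>u. orbit_fun k W0 0 u - 1)) u + (\<Sum>i<N. orbit_log_term k W0 i u))
          has_fps_expansion orbit_log_partial_fps k W0 N"
    unfolding orbit_log_partial_fps_def
    by (intro has_fps_expansion_add has_fps_expansion_sum orbit_log_term_has_fps_expansion)
  then show ?thesis by (simp add: orbit_log_partial_def[abs_def])
qed

lemma fps_rational_orbit_log_partial_fps: "fps_rational (orbit_log_partial_fps k W0 N)"
proof -
  have "fps_rational (fps_compose (fps_ln 1) (orbit_ratio_fps k W0 i) * fps_const (1 / 2 ^ Suc i))" for i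
    by (intro fps_rational_mult fps_rational_compose fps_rational_fps_ln fps_rational_orbit_ratio_fps
        fps_rational_const) simp
  then have "fps_rational (\<Sum>i<N. fps_compose (fps_ln 1) (orbit_ratio_fps k W0 i) * fps_const (1 / 2 ^ Suc i))"
    by (induction N) (auto simp: fps_rational_def)
  then show ?thesis unfolding orbit_log_partial_fps_def
    by (intro fps_rational_add fps_rational_compose fps_rational_fps_ln fps_rational_diff
        fps_rational_orbit_fps fps_rational_1)
qed

end

locale orbit_log_disc = dehomogenized_orbit +
  fixes \<delta> :: real
  assumes delta_pos: "\<delta> > 0" and delta_small: "\<delta> \<le> 1 / (8 * exp 1)"
    and W0_near_1: "\<And>u::complex. norm u < \<delta> \<Longrightarrow> norm (poly (map_poly of_rat W0) u - 1) < 1/4"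
begin

lemma exp_1_norm_le:
  assumes "norm (u::complex) < \<delta>"
  shows "exp 1 * norm u \<le> 1/8"
proof -
  have "exp 1 * norm u \<le> exp 1 * (1 / (8 * exp 1))"
    using assms delta_small by (intro mult_left_mono) auto
  then show ?thesis by simp
qed

lemma orbit_exp_bound_small:
  fixes u :: complex
  assumes u: "norm u < \<delta>" and y: "y \<le> exp 1 * (exp 1 * norm u) ^ orbit_exp k N"
  shows "y \<le> exp 1 * (exp 1 * norm u) ^ Suc N" and "y < 1/2"
proof -
  define x where "x = exp 1 * norm u"
  have x: "0 \<le> x" "x \<le> 1/8" using exp_1_norm_le[OF u] by (auto simp: x_def)
  have "x ^ orbit_exp k N \<le> x ^ Suc N"
    using x Suc_le_orbit_exp[OF k_pos] by (intro power_decreasing) auto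
  then have "exp 1 * x ^ orbit_exp k N \<le> exp 1 * x ^ Suc N" by (rule mult_left_mono) simp
  then show le: "y \<le> exp 1 * x ^ Suc N" using y unfolding x_def[symmetric] by linarith
  have "x ^ Suc N \<le> 1/8" using x power_le_one[of x N] mult_mono[of x "1/8" "x ^ N" 1] by simp
  then have "exp 1 * x ^ Suc N \<le> exp 1 * (1/8)" by simp
  then show "y < 1/2" using le e_less_272 by linarith
qed

lemma orbit_log_partial_bound:
  fixes u :: complex
  assumes u: "norm u < \<delta>"
  shows "exp (2 ^ N * orbit_log_partial k W0 N u) = orbit_fun k W0 N u \<and>
         norm (orbit_log_partial k W0 N u) \<le> 1/2 + (\<Sum>j<N. exp 1 * (exp 1 * norm u) ^ Suc j)"
proof (induction N)
  case 0
  have d: "norm (orbit_fun k W0 0 u - 1) < 1/4" using W0_near_1[OF u] by simp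
  then have "norm (Ln (1 + (orbit_fun k W0 0 u - 1))) \<le> 2 * norm (orbit_fun k W0 0 u - 1)"
    by (intro norm_Ln_le) auto
  then have "norm (Ln (orbit_fun k W0 0 u)) \<le> 1/2" using d by simp
  moreover have "orbit_fun k W0 0 u \<noteq> 0" using d by auto
  ultimately show ?case by (simp add: orbit_log_partial_def)
next
  case (Suc N)
  define p where "p = orbit_log_partial k W0 N u"
  define w where "w = orbit_fun k W0 N u"
  define q where "q = orbit_ratio k W0 N u"
  have w: "exp (2 ^ N * p) = w" and p: "norm p \<le> 1/2 + (\<Sum>j<N. exp 1 * (exp 1 * norm u) ^ Suc j)"
    using Suc by (auto simp: w_def p_def)
  have "norm p \<le> 1" using p exp_1_sum_powers_le[of "exp 1 * norm u" N] exp_1_norm_le[OF u] by simp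
  then have "norm q \<le> exp 1 * (exp 1 * norm u) ^ orbit_exp k N"
    using norm_power_orbit_exp_div_le[OF k_pos w] by (simp add: q_def orbit_ratio_def w_def)
  note q = orbit_exp_bound_small[OF u this]
  have log_term: "norm (orbit_log_term k W0 N u) \<le> exp 1 * (exp 1 * norm u) ^ Suc N"
    using norm_Ln_one_plus_div_le[OF q(2), of N] q(1) by (simp add: orbit_log_term_def q_def)
  have partial: "orbit_log_partial k W0 (Suc N) u = p + Ln (1 + q) / 2 ^ Suc N"
    by (simp add: orbit_log_partial_def orbit_log_term_def p_def q_def)
  have "norm (orbit_log_partial k W0 (Suc N) u) \<le> norm p + norm (orbit_log_term k W0 N u)"
    unfolding partial by (simp add: orbit_log_term_def q_def norm_triangle_ineq)
  then have norm_bound: "norm (orbit_log_partial k W0 (Suc N) u)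
      \<le> 1/2 + (\<Sum>j<Suc N. exp 1 * (exp 1 * norm u) ^ Suc j)"
    using p log_term by simp
  have "1 + q \<noteq> 0"
  proof
    assume "1 + q = 0"
    then have "q = -1" by (simp add: add_eq_0_iff)
    then show False using q(2) by simp
  qed
  have "2 ^ Suc N * orbit_log_partial k W0 (Suc N) u = 2 * (2 ^ N * p) + Ln (1 + q)"
    unfolding partial by (simp add: field_simps)
  then have "exp (2 ^ Suc N * orbit_log_partial k W0 (Suc N) u) = exp (2 ^ N * p) ^ 2 * exp (Ln (1 + q))"
    by (simp only: exp_add exp_double)
  also have "\<dots> = w ^ 2 * (1 + q)" using w \<open>1 + q \<noteq> 0\<close> by simp
  also have "\<dots> = orbit_fun k W0 (Suc N) u"
    using w by (auto simp: q_def orbit_ratio_def w_def field_simps)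
  finally show ?case using norm_bound by blast
qed

lemma orbit_log_partial_norm_le_1:
  fixes u :: complex
  assumes u: "norm u < \<delta>"
  shows "norm (orbit_log_partial k W0 N u) \<le> 1"
  using orbit_log_partial_bound[OF u, of N] exp_1_sum_powers_le[of "exp 1 * norm u" N]
    exp_1_norm_le[OF u] by simp

lemma orbit_fun_neq_0: "norm u < \<delta> \<Longrightarrow> orbit_fun k W0 N (u::complex) \<noteq> 0"
  using orbit_log_partial_bound[of u N] by (metis exp_not_eq_zero)

lemma orbit_ratio_norm_le:
  fixes u :: complex
  assumes u: "norm u < \<delta>"
  shows "norm (orbit_ratio k W0 N u) \<le> exp 1 * (exp 1 * norm u) ^ orbit_exp k N"
proof -
  have "exp (2 ^ N * orbit_log_partial k W0 N u) = orbit_fun k W0 N u"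
    using orbit_log_partial_bound[OF u] by blast
  from norm_power_orbit_exp_div_le[OF k_pos this orbit_log_partial_norm_le_1[OF u]]
  show ?thesis by (simp add: orbit_ratio_def)
qed

lemma orbit_ratio_norm_less: "norm u < \<delta> \<Longrightarrow> norm (orbit_ratio k W0 N u) < 1/2"
  using orbit_exp_bound_small(2)[OF _ orbit_ratio_norm_le] .

lemma orbit_log_term_norm_le:
  fixes u :: complex
  assumes u: "norm u < \<delta>"
  shows "norm (orbit_log_term k W0 N u) \<le> exp 1 * (exp 1 * norm u) ^ orbit_exp k N"
  using norm_Ln_one_plus_div_le[OF orbit_ratio_norm_less[OF u]] orbit_ratio_norm_le[OF u]
  unfolding orbit_log_term_def by (rule order_trans)

lemma orbit_log_term_norm_le_Suc:
  "norm u < \<delta> \<Longrightarrow> norm (orbit_log_term k W0 N u) \<le> exp 1 * (exp 1 * norm u) ^ Suc N"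
  using orbit_exp_bound_small(1)[OF _ orbit_log_term_norm_le] .

lemma summable_orbit_log_term:
  fixes u :: complex
  assumes u: "norm u < \<delta>"
  shows "summable (\<lambda>i. orbit_log_term k W0 i u)"
proof (rule summable_comparison_test')
  have "0 \<le> exp 1 * norm u" "exp 1 * norm u < 1" using exp_1_norm_le[OF u] by auto
  then show "summable (\<lambda>i. exp 1 * (exp 1 * norm u) ^ Suc i)"
    by (intro summable_mult summable_geometric[THEN summable_Suc_iff[THEN iffD2]]) auto
qed (rule orbit_log_term_norm_le_Suc[OF u])

lemma Ln_orbit_fun_0_holomorphic: "(\<lambda>u. Ln (orbit_fun k W0 0 u)) holomorphic_on ball 0 \<delta>"
proof (intro holomorphic_on_Ln' orbit_fun_holomorphic)
  fix u :: complex assume "u \<in> ball 0 \<delta>"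
  then have "norm (orbit_fun k W0 0 u - 1) < 1" using W0_near_1[of u] by simp
  then show "orbit_fun k W0 0 u \<notin> \<real>\<^sub>\<le>\<^sub>0" by (rule not_nonpos_Reals_if_near_1)
qed

lemma orbit_log_term_holomorphic: "orbit_log_term k W0 N holomorphic_on ball 0 \<delta>"
proof -
  have "1 + u ^ orbit_exp k N * inverse (orbit_fun k W0 N u ^ 2) \<notin> \<real>\<^sub>\<le>\<^sub>0" if "u \<in> ball 0 \<delta>" for u :: complex
    using orbit_ratio_norm_less[of u N] that by (intro not_nonpos_Reals_if_near_1) (simp add: orbit_ratio_def)
  moreover have "orbit_fun k W0 N u ^ 2 \<noteq> 0" if "u \<in> ball 0 \<delta>" for u :: complex
    using orbit_fun_neq_0[of u N] that by simp
  ultimately have "(\<lambda>u. Ln (1 + u ^ orbit_exp k N * inverse (orbit_fun k W0 N u ^ 2)) / 2 ^ Suc N)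
      holomorphic_on ball 0 \<delta>"
    by (intro holomorphic_intros holomorphic_on_Ln' orbit_fun_holomorphic) auto
  then show ?thesis by (simp add: orbit_log_term_def[abs_def] orbit_ratio_def)
qed

lemma orbit_log_partial_holomorphic: "orbit_log_partial k W0 N holomorphic_on ball 0 \<delta>"
  unfolding orbit_log_partial_def[abs_def]
  by (intro holomorphic_on_add holomorphic_on_sum Ln_orbit_fun_0_holomorphic orbit_log_term_holomorphic)

lemma uniform_limit_orbit_log_partial:
  "uniform_limit (cball 0 (\<delta>/2)) (orbit_log_partial k W0) (orbit_log k W0) sequentially"
proof -
  define x where "x = exp 1 * (\<delta>/2)"
  have "exp 1 * \<delta> \<le> 1/8" using delta_small by (simp add: field_simps)
  then have x: "0 \<le> x" "x < 1" using delta_pos by (auto simp: x_def)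
  have "uniform_limit (cball 0 (\<delta>/2)) (\<lambda>n u. \<Sum>i<n. orbit_log_term k W0 i u)
      (\<lambda>u. \<Sum>i. orbit_log_term k W0 i u) sequentially"
  proof (rule Weierstrass_m_test)
    show "summable (\<lambda>i. exp 1 * x ^ Suc i)"
      using x by (intro summable_mult summable_geometric[THEN summable_Suc_iff[THEN iffD2]]) auto
    fix n u assume u: "u \<in> cball (0::complex) (\<delta>/2)"
    then have "(exp 1 * norm u) ^ Suc n \<le> x ^ Suc n" by (intro power_mono) (auto simp: x_def)
    moreover have "norm u < \<delta>" using u delta_pos by auto
    ultimately show "norm (orbit_log_term k W0 n u) \<le> exp 1 * x ^ Suc n"
      using orbit_log_term_norm_le_Suc[of u n] by (smt (verit) exp_gt_zero mult_left_mono)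
  qed
  then show ?thesis unfolding orbit_log_partial_def[abs_def] orbit_log_def[abs_def]
    by (intro uniform_limit_add uniform_limit_const)
qed

lemma orbit_log_holomorphic: "orbit_log k W0 holomorphic_on ball 0 (\<delta>/2)"
proof (rule holomorphic_uniform_limit[OF _ uniform_limit_orbit_log_partial])
  have sub: "cball (0::complex) (\<delta>/2) \<subseteq> ball 0 \<delta>" using delta_pos by auto
  show "\<forall>\<^sub>F n in sequentially. continuous_on (cball 0 (\<delta>/2)) (orbit_log_partial k W0 n) \<and>
      orbit_log_partial k W0 n holomorphic_on ball 0 (\<delta>/2)"
  proof (intro always_eventually allI conjI)
    fix n
    have "orbit_log_partial k W0 n holomorphic_on cball 0 (\<delta>/2)"
      by (rule holomorphic_on_subset[OF orbit_log_partial_holomorphic sub])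
    then show "continuous_on (cball 0 (\<delta>/2)) (orbit_log_partial k W0 n)"
      by (rule holomorphic_on_imp_continuous_on)
    show "orbit_log_partial k W0 n holomorphic_on ball 0 (\<delta>/2)"
      by (rule holomorphic_on_subset[OF orbit_log_partial_holomorphic]) (use sub in auto)
  qed
qed auto

lemma orbit_log_has_fps_expansion: "orbit_log k W0 has_fps_expansion fps_expansion (orbit_log k W0) 0"
  using orbit_log_holomorphic delta_pos by (intro has_fps_expansion_fps_expansion) auto

end

lemma le_0_if_le_powers:
  fixes c C \<rho> :: real
  assumes "0 < \<rho>" "1 \<le> m" "C \<ge> 0" "\<And>r. 0 < r \<Longrightarrow> r < \<rho> \<Longrightarrow> c \<le> C * r ^ m"
  shows "c \<le> 0"
proof (rule ccontr)
  assume "\<not> c \<le> 0"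
  then have c: "c > 0" by simp
  define r where "r = min (\<rho>/2) (min (1/2) (c / (2 * C + 1)))"
  have r: "0 < r" "r < \<rho>" "r \<le> 1" using assms(1,3) c by (auto simp: r_def)
  have "r ^ m \<le> r ^ 1" using r assms(2) by (intro power_decreasing) auto
  then have "C * r ^ m \<le> C * r" using assms(3) by (simp add: mult_left_mono)
  also have "\<dots> \<le> C * (c / (2 * C + 1))" using assms(3) by (intro mult_left_mono) (auto simp: r_def)
  also have "\<dots> < c"
  proof -
    have "C * c < c * (2 * C + 1)" using c assms(3) by (simp add: algebra_simps add_pos_nonneg)
    then show ?thesis using assms(3) by (simp add: field_simps)
  qed
  finally show False using assms(4)[OF r(1,2)] by simp
qed

context orbit_log_disc
begin

lemma norm_orbit_log_minus_partial_le:
  fixes x :: complex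
  assumes x: "norm x = r" "r < \<delta>/2"
  shows "norm (orbit_log k W0 x - orbit_log_partial k W0 N x) \<le> 2 * exp 1 * (exp 1 * r) ^ orbit_exp k N"
proof -
  have xd: "norm x < \<delta>" using x norm_ge_zero[of x] by linarith
  define y where "y = exp 1 * r"
  have y: "0 \<le> y" "y \<le> 1/8" using exp_1_norm_le[OF xd] x(1) by (auto simp: y_def)
  have "orbit_log k W0 x - orbit_log_partial k W0 N x = (\<Sum>n. orbit_log_term k W0 (n + N) x)"
    using suminf_split_initial_segment[OF summable_orbit_log_term[OF xd], of N]
    by (simp add: orbit_log_def orbit_log_partial_def)
  also have "norm \<dots> \<le> (\<Sum>n. exp 1 * y ^ orbit_exp k N * y ^ n)"
  proof (rule norm_suminf_le)
    show "summable (\<lambda>n. exp 1 * y ^ orbit_exp k N * y ^ n)"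
      using y by (intro summable_mult summable_geometric) auto
    fix n
    have "norm (orbit_log_term k W0 (n + N) x) \<le> exp 1 * y ^ orbit_exp k (n + N)"
      using orbit_log_term_norm_le[OF xd] x(1) by (simp add: y_def)
    also have "y ^ orbit_exp k (n + N) \<le> y ^ (orbit_exp k N + n)"
      using y orbit_exp_add_le[OF k_pos, of N n] by (intro power_decreasing) auto
    finally show "norm (orbit_log_term k W0 (n + N) x) \<le> exp 1 * y ^ orbit_exp k N * y ^ n"
      by (simp add: power_add mult_ac mult_left_mono)
  qed
  also have "\<dots> = exp 1 * y ^ orbit_exp k N * (1 / (1 - y))"
    using y by (subst suminf_mult) (auto intro!: summable_geometric simp: suminf_geometric)
  also have "\<dots> \<le> exp 1 * y ^ orbit_exp k N * 2"
    using y by (intro mult_left_mono) (auto simp: field_simps)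
  finally show ?thesis by (simp add: y_def mult_ac)
qed

text \<open>The difference \<open>orbit_log - orbit_log_partial N\<close> is \<open>O(|u|^orbit_exp k N)\<close> on small
  circles, so by Cauchy's inequality its Taylor coefficients of lower order vanish.\<close>

lemma fps_expansion_orbit_log_nth:
  assumes j: "j < orbit_exp k N"
  shows "fps_expansion (orbit_log k W0) 0 $ j = orbit_log_partial_fps k W0 N $ j"
proof -
  define D where "D = (\<lambda>u. orbit_log k W0 u - orbit_log_partial k W0 N u)"
  have "D has_fps_expansion fps_expansion (orbit_log k W0) 0 - orbit_log_partial_fps k W0 N"
    unfolding D_def
    by (intro has_fps_expansion_diff orbit_log_has_fps_expansion orbit_log_partial_has_fps_expansion)
  then have c: "(fps_expansion (orbit_log k W0) 0 - orbit_log_partial_fps k W0 N) $ j = (deriv ^^ j) D 0 / fact j"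
    by (rule fps_nth_fps_expansion)
  have "ball (0::complex) (\<delta>/2) \<subseteq> ball 0 \<delta>" using delta_pos by auto
  then have D: "D holomorphic_on ball 0 (\<delta>/2)"
    unfolding D_def using orbit_log_holomorphic holomorphic_on_subset[OF orbit_log_partial_holomorphic]
    by (intro holomorphic_on_diff)
  define C where "C = 2 * exp 1 * exp (1::real) ^ orbit_exp k N"
  have "norm ((deriv ^^ j) D 0 / fact j) \<le> 0"
  proof (rule le_0_if_le_powers[of "\<delta>/2" "orbit_exp k N - j" C])
    fix r :: real assume r: "0 < r" "r < \<delta>/2"
    have "cball (0::complex) r \<subseteq> ball 0 (\<delta>/2)" using r by (intro subsetI) auto
    then have "norm ((deriv ^^ j) D 0) \<le> fact j * (2 * exp 1 * (exp 1 * r) ^ orbit_exp k N) / r ^ j"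
      using D r unfolding D_def
      by (intro Cauchy_inequality norm_orbit_log_minus_partial_le)
        (auto intro: holomorphic_on_subset holomorphic_on_imp_continuous_on)
    then have "norm ((deriv ^^ j) D 0 / fact j) \<le> 2 * exp 1 * (exp 1 * r) ^ orbit_exp k N / r ^ j"
      by (simp add: norm_divide field_simps)
    also have "\<dots> = C * r ^ (orbit_exp k N - j)"
    proof -
      have "r ^ orbit_exp k N = r ^ (orbit_exp k N - j) * r ^ j" using j by (simp flip: power_add)
      then show ?thesis using r by (simp add: C_def power_mult_distrib field_simps)
    qed
    finally show "norm ((deriv ^^ j) D 0 / fact j) \<le> C * r ^ (orbit_exp k N - j)" .
  qed (use delta_pos j in \<open>auto simp: C_def\<close>)
  then show ?thesis using c by simp
qed

lemma fps_expansion_orbit_log_nth_Rats: "fps_expansion (orbit_log k W0) 0 $ j \<in> \<rat>"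
  using fps_expansion_orbit_log_nth[of j j] Suc_le_orbit_exp[OF k_pos, of j]
    fps_rational_orbit_log_partial_fps[of j] by (simp add: fps_rational_def)

lemma fps_expansion_orbit_log_nth_0: "fps_expansion (orbit_log k W0) 0 $ 0 = 0"
proof -
  have "orbit_log_term k W0 i 0 = 0" for i
    using orbit_exp_neq_0[of i] by (simp add: orbit_log_term_def orbit_ratio_def power_0_left)
  then have "orbit_log k W0 0 = 0"
    using orbit_fun_0[OF k_pos W0_0, where 'a=complex] by (simp add: orbit_log_def del: orbit_fun.simps)
  then show ?thesis using has_fps_expansion_imp_0_eq_fps_nth_0[OF orbit_log_has_fps_expansion] by simp
qed

end

subsection \<open>Restriction to the real axis\<close>

lemma of_real_of_rat: "of_real (of_rat q) = (of_rat q :: 'a::real_field)"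
  by (cases q) (simp add: of_rat_rat)

lemma orbit_fun_of_real: "orbit_fun k W0 N (of_real u) = (of_real (orbit_fun k W0 N u) :: 'a::real_field)"
proof -
  have "poly (map_poly of_rat p) (of_real u) = (of_real (poly (map_poly of_rat p) u) :: 'a)" for p
    by (induction p) (simp_all add: map_poly_pCons of_real_of_rat)
  then show ?thesis by (induction N) simp_all
qed

context orbit_log_disc
begin

lemma orbit_log_partial_of_real:
  fixes u :: real
  assumes u: "\<bar>u\<bar> < \<delta>"
  shows "orbit_fun k W0 N u > 0 \<and> orbit_log_partial k W0 N (of_real u) = of_real (ln (orbit_fun k W0 N u) / 2 ^ N)"
proof (induction N)
  case 0
  have "norm (orbit_fun k W0 0 (complex_of_real u) - 1) < 1/4" using W0_near_1[of "of_real u"] u by simp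
  then have "\<bar>orbit_fun k W0 0 u - 1\<bar> < 1/4" unfolding orbit_fun_of_real
    by (metis norm_of_real of_real_1 of_real_diff)
  then have "orbit_fun k W0 0 u > 0" by linarith
  then show ?case by (simp add: orbit_log_partial_def orbit_fun_of_real Ln_of_real del: orbit_fun.simps)
next
  case (Suc N)
  define w where "w = orbit_fun k W0 N u"
  have w: "w > 0" "orbit_log_partial k W0 N (of_real u) = of_real (ln w / 2 ^ N)"
    using Suc by (auto simp: w_def)
  define r where "r = u ^ orbit_exp k N * inverse (w ^ 2)"
  have q: "orbit_ratio k W0 N (of_real u) = of_real r"
    by (simp add: orbit_ratio_def r_def w_def orbit_fun_of_real del: orbit_fun.simps)
  then have "\<bar>r\<bar> < 1/2" using orbit_ratio_norm_less[of "of_real u" N] u by simp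
  then have r: "1 + r > 0" by simp
  have "orbit_fun k W0 (Suc N) u = w ^ 2 * (1 + r)" using w by (simp add: w_def r_def field_simps)
  then have pos: "orbit_fun k W0 (Suc N) u > 0"
    and "ln (orbit_fun k W0 (Suc N) u) = 2 * ln w + ln (1 + r)"
    using w r by (simp_all add: ln_mult ln_realpow)
  then have "ln w / 2 ^ N + ln (1 + r) / 2 ^ Suc N = ln (orbit_fun k W0 (Suc N) u) / 2 ^ Suc N"
    by (simp add: field_simps del: orbit_fun.simps)
  moreover have "orbit_log_partial k W0 (Suc N) (of_real u)
      = of_real (ln w / 2 ^ N) + of_real (ln (1 + r) / 2 ^ Suc N)"
    using w(2) q r by (simp add: orbit_log_partial_def orbit_log_term_def Ln_of_real[symmetric] del: orbit_fun.simps)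
  ultimately have "orbit_log_partial k W0 (Suc N) (of_real u)
      = of_real (ln (orbit_fun k W0 (Suc N) u) / 2 ^ Suc N)"
    by (metis of_real_add)
  then show ?case using pos by blast
qed

lemma norm_log_orbit_fun_le_1:
  assumes u: "\<bar>u\<bar> < \<delta>"
  shows "\<bar>ln (orbit_fun k W0 N u) / 2 ^ N\<bar> \<le> 1"
proof -
  have "norm (complex_of_real (ln (orbit_fun k W0 N u) / 2 ^ N)) \<le> 1"
    using orbit_log_partial_norm_le_1[of "of_real u" N] orbit_log_partial_of_real[OF u, of N] u
    by (simp del: orbit_fun.simps of_real_divide)
  then show ?thesis by (simp only: norm_of_real)
qed

lemma log_orbit_fun_tendsto:
  assumes u: "\<bar>u\<bar> < \<delta>"
  shows "(\<lambda>N. ln (orbit_fun k W0 N u) / 2 ^ N) \<longlonglongrightarrow> Re (orbit_log k W0 (of_real u))"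
proof -
  have "(\<lambda>N. orbit_log_partial k W0 N (of_real u)) \<longlonglongrightarrow> orbit_log k W0 (of_real u)"
    unfolding orbit_log_partial_def orbit_log_def using u
    by (intro tendsto_add tendsto_const summable_LIMSEQ summable_orbit_log_term) simp
  from tendsto_Re[OF this] show ?thesis using orbit_log_partial_of_real[OF u] by simp
qed

lemma orbit_log_of_real_sums:
  assumes u: "\<bar>u\<bar> < \<delta>/2"
  shows "(\<lambda>n. Re (fps_expansion (orbit_log k W0) 0 $ n) * u ^ n) sums Re (orbit_log k W0 (of_real u))"
proof -
  have "(\<lambda>n. fps_expansion (orbit_log k W0) 0 $ n * of_real u ^ n) sums orbit_log k W0 (of_real u)"
    using orbit_log_holomorphic u
    by (intro has_fps_expansion_imp_sums_complex[OF orbit_log_has_fps_expansion, of "ereal (\<delta>/2)"]) auto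
  from sums_Re[OF this] show ?thesis by (simp flip: of_real_power)
qed

end

context dehomogenized_orbit
begin

lemma exists_orbit_log_disc: "\<exists>\<delta>. orbit_log_disc k W0 \<delta>"
proof -
  have "continuous (at 0) (\<lambda>u::complex. poly (map_poly of_rat W0) u)" by simp
  moreover have "poly (map_poly of_rat W0) (0::complex) = 1"
    using W0_0 by (simp add: poly_0_coeff_0 coeff_map_poly)
  ultimately obtain d where d: "d > 0"
      "\<forall>u::complex. dist u 0 < d \<longrightarrow> dist (poly (map_poly of_rat W0) u) 1 < 1/4"
    unfolding continuous_at_eps_delta by (metis divide_pos_pos zero_less_numeral zero_less_one)
  have "orbit_log_disc k W0 (min d (1 / (8 * exp 1)))"
  proof unfold_locales
    show "min d (1 / (8 * exp 1)) > 0" "min d (1 / (8 * exp 1)) \<le> 1 / (8 * exp 1)" using d(1) by auto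
    fix u :: complex assume "norm u < min d (1 / (8 * exp 1))"
    then show "norm (poly (map_poly of_rat W0) u - 1) < 1/4" using d(2) by (simp add: dist_norm)
  qed
  then show ?thesis by blast
qed

lemma log_orbit_fun_expansion:
  obtains F :: "rat fps" and \<rho> :: real where "\<rho> > 0" and "fps_nth F 0 = 0"
    and "\<And>u N. \<bar>u\<bar> < \<rho> \<Longrightarrow> orbit_fun k W0 N u > 0 \<and> \<bar>ln (orbit_fun k W0 N u) / 2 ^ N\<bar> \<le> 1"
    and "\<And>u. \<bar>u\<bar> < \<rho> \<Longrightarrow> summable (\<lambda>n. real_of_rat (fps_nth F n) * u ^ n)"
    and "\<And>u. \<bar>u\<bar> < \<rho> \<Longrightarrow> (\<lambda>N. ln (orbit_fun k W0 N u) / 2 ^ N) \<longlonglongrightarrow> fps_eval_real F u"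
proof -
  obtain \<delta> where "orbit_log_disc k W0 \<delta>" using exists_orbit_log_disc by blast
  then interpret orbit_log_disc k W0 \<delta> .
  define \<Phi> where "\<Phi> = fps_expansion (orbit_log k W0) 0"
  have "\<exists>q. \<Phi> $ n = of_rat q" for n
    using fps_expansion_orbit_log_nth_Rats[of n] unfolding \<Phi>_def Rats_def by blast
  then obtain f where f: "\<And>n. \<Phi> $ n = of_rat (f n)" by metis
  define F where "F = Abs_fps f"
  have F_re: "real_of_rat (fps_nth F n) = Re (\<Phi> $ n)" for n
    using f[of n] by (simp add: F_def flip: of_real_of_rat[where 'a=complex])
  have F0: "fps_nth F 0 = 0"
    using f[of 0] fps_expansion_orbit_log_nth_0 by (simp add: F_def \<Phi>_def)
  have sums: "(\<lambda>n. real_of_rat (fps_nth F n) * u ^ n) sums Re (orbit_log k W0 (of_real u))"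
    if "\<bar>u\<bar> < \<delta>/2" for u
    using orbit_log_of_real_sums[OF that] by (simp add: F_re \<Phi>_def)
  show ?thesis
  proof
    show "\<delta>/2 > 0" using delta_pos by simp
    show "fps_nth F 0 = 0" by (fact F0)
    fix u :: real assume u: "\<bar>u\<bar> < \<delta>/2"
    then show "summable (\<lambda>n. real_of_rat (fps_nth F n) * u ^ n)" using sums sums_summable by blast
    show "(\<lambda>N. ln (orbit_fun k W0 N u) / 2 ^ N) \<longlonglongrightarrow> fps_eval_real F u"
      using log_orbit_fun_tendsto[of u] sums[OF u] u by (simp add: fps_eval_real_def sums_iff)
    show "orbit_fun k W0 N u > 0 \<and> \<bar>ln (orbit_fun k W0 N u) / 2 ^ N\<bar> \<le> 1" for N
      using orbit_log_partial_of_real[of u N] norm_log_orbit_fun_le_1[of u N] u by simp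
  qed
qed

end

subsection \<open>The height expansion\<close>

lemma abs_one_div_less:
  fixes x r :: real
  assumes "0 < r" "1 / r < \<bar>x\<bar>"
  shows "\<bar>1 / x\<bar> < r"
proof -
  have x: "0 < \<bar>x\<bar>" using assms by (meson less_trans zero_less_divide_1_iff)
  have "1 < \<bar>x\<bar> * r" using assms by (simp add: pos_divide_less_eq)
  then show ?thesis using x by (simp add: abs_divide pos_divide_less_eq mult.commute)
qed

text \<open>Stated with the defining limit rather than \<open>canon_height_spec\<close>, whose \<open>lim\<close> is
  meaningless for a divergent sequence.\<close>

definition height_expansion :: "(rat \<Rightarrow> rat) \<Rightarrow> real \<Rightarrow> rat fps \<Rightarrow> bool" where
  "height_expansion X c F \<longleftrightarrow> fps_nth F 0 = 0 \<and>
     (\<exists>r > 0. \<forall>x::real. \<bar>x\<bar> < r \<longrightarrow> summable (\<lambda>n. real_of_rat (fps_nth F n) * x ^ n)) \<and>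
     (\<exists>T::real. \<forall>t::rat. \<bar>real_of_rat t\<bar> > T \<longrightarrow>
        (\<lambda>N. weil_height ((f_spec t ^^ N) (X t)) / 2 ^ N)
          \<longlonglongrightarrow> c * weil_height t + fps_eval_real F (1 / real_of_rat t))"

lemma height_expansion_monic_poly:
  fixes P :: "int poly"
  assumes monic: "lead_coeff P = 1" and deg: "degree P \<ge> 1"
  shows "\<exists>F. height_expansion (poly (map_poly rat_of_int P)) (degree P) F"
proof -
  define P' where "P' = map_poly rat_of_int P"
  define W where "W = reflect_poly P'"
  have dP: "degree P' = degree P" unfolding P'_def by (rule degree_map_poly) simp
  have "lead_coeff P' = 1" unfolding P'_def using monic by (subst lead_coeff_map_poly_nz) auto
  then interpret dehomogenized_orbit "degree P" W
    using deg by unfold_locales (simp_all add: W_def)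
  obtain F \<rho> where \<rho>: "\<rho> > 0" and F0: "fps_nth F 0 = 0"
    and bound: "\<And>u N. \<bar>u\<bar> < \<rho> \<Longrightarrow> orbit_fun (degree P) W N u > 0 \<and>
                   \<bar>ln (orbit_fun (degree P) W N u) / 2 ^ N\<bar> \<le> 1"
    and summable: "\<And>u. \<bar>u\<bar> < \<rho> \<Longrightarrow> summable (\<lambda>n. real_of_rat (fps_nth F n) * u ^ n)"
    and lim: "\<And>u. \<bar>u\<bar> < \<rho> \<Longrightarrow> (\<lambda>N. ln (orbit_fun (degree P) W N u) / 2 ^ N) \<longlonglongrightarrow> fps_eval_real F u"
    by (rule log_orbit_fun_expansion) blast
  have limit: "(\<lambda>N. weil_height ((f_spec t ^^ N) (poly P' t)) / 2 ^ N)
          \<longlonglongrightarrow> real (degree P) * weil_height t + fps_eval_real F (1 / real_of_rat t)"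
    if t: "\<bar>real_of_rat t\<bar> > max 3 (1 / \<rho>)" for t
  proof -
    have t3: "3 \<le> \<bar>real_of_rat t\<bar>" using t by simp
    then have "t \<noteq> 0" by auto
    then have dehom: "poly P' t = t ^ degree P * poly W (1 / t)"
      using dP by (simp add: W_def poly_reflect_poly_nz power_one_over field_simps)
    have u: "\<bar>1 / real_of_rat t\<bar> < \<rho>" using t \<rho> by (intro abs_one_div_less) auto
    obtain a b where q: "quotient_of t = (a, b)" by (cases "quotient_of t")
    obtain A0 where A0: "poly P' t = rat_of_int A0 / rat_of_int b ^ degree P" "coprime A0 b"
      using monic_poly_int_div[OF monic q] by (auto simp: P'_def)
    have step: "weil_height ((f_spec t ^^ N) (poly P' t)) / 2 ^ N
        = real (degree P) * weil_height t + ln (orbit_fun (degree P) W N (1 / real_of_rat t)) / 2 ^ N" for N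
      using bound[OF u, of N] by (intro weil_height_funpow_f_spec[OF k_pos q t3 A0 dehom]) auto
    show ?thesis unfolding step by (intro tendsto_add tendsto_const lim[OF u])
  qed
  show ?thesis unfolding height_expansion_def P'_def[symmetric]
  proof (intro exI[of _ F] conjI F0)
    show "\<exists>r>0. \<forall>x::real. \<bar>x\<bar> < r \<longrightarrow> summable (\<lambda>n. real_of_rat (fps_nth F n) * x ^ n)"
      using \<rho> summable by blast
    show "\<exists>T. \<forall>t. \<bar>real_of_rat t\<bar> > T \<longrightarrow> (\<lambda>N. weil_height ((f_spec t ^^ N) (poly P' t)) / 2 ^ N)
        \<longlonglongrightarrow> real (degree P) * weil_height t + fps_eval_real F (1 / real_of_rat t)"
      using limit by blast
  qed
qed

lemma height_expansion_f_spec: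
  assumes "height_expansion (\<lambda>t. f_spec t (X t)) c F"
  shows "height_expansion X (c / 2) (Abs_fps (\<lambda>n. fps_nth F n / 2))"
proof -
  let ?G = "Abs_fps (\<lambda>n. fps_nth F n / 2)"
  have G: "real_of_rat (fps_nth ?G n) * x ^ n = real_of_rat (fps_nth F n) * x ^ n / 2" for n x
    by (simp add: of_rat_divide)
  obtain r T where r: "r > 0" "\<And>x. \<bar>x\<bar> < r \<Longrightarrow> summable (\<lambda>n. real_of_rat (fps_nth F n) * x ^ n)"
    and T: "\<And>t. \<bar>real_of_rat t\<bar> > T \<Longrightarrow> (\<lambda>N. weil_height ((f_spec t ^^ N) (f_spec t (X t))) / 2 ^ N)
              \<longlonglongrightarrow> c * weil_height t + fps_eval_real F (1 / real_of_rat t)"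
    using assms unfolding height_expansion_def by blast
  have "(\<lambda>N. weil_height ((f_spec t ^^ N) (X t)) / 2 ^ N)
          \<longlonglongrightarrow> c / 2 * weil_height t + fps_eval_real ?G (1 / real_of_rat t)"
    if t: "\<bar>real_of_rat t\<bar> > max T (1 / r)" for t
  proof (rule LIMSEQ_imp_Suc)
    have "\<bar>1 / real_of_rat t\<bar> < r" using t r(1) by (intro abs_one_div_less) auto
    then have "fps_eval_real ?G (1 / real_of_rat t) = fps_eval_real F (1 / real_of_rat t) / 2"
      unfolding fps_eval_real_def G by (intro suminf_divide r(2))
    then have lim: "c / 2 * weil_height t + fps_eval_real ?G (1 / real_of_rat t)
        = (c * weil_height t + fps_eval_real F (1 / real_of_rat t)) / 2" by simp
    have "weil_height ((f_spec t ^^ Suc N) (X t)) / 2 ^ Suc N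
        = weil_height ((f_spec t ^^ N) (f_spec t (X t))) / 2 ^ N / 2" for N
      by (simp add: funpow_Suc_right del: funpow.simps)
    then show "(\<lambda>N. weil_height ((f_spec t ^^ Suc N) (X t)) / 2 ^ Suc N)
          \<longlonglongrightarrow> c / 2 * weil_height t + fps_eval_real ?G (1 / real_of_rat t)"
      unfolding lim using t by (simp only:) (intro tendsto_divide T tendsto_const, auto)
  qed
  moreover have "\<bar>x\<bar> < r \<Longrightarrow> summable (\<lambda>n. real_of_rat (fps_nth ?G n) * x ^ n)" for x
    unfolding G using r(2) by (rule summable_divide)
  moreover have "fps_nth ?G 0 = 0" using assms by (simp add: height_expansion_def)
  ultimately show ?thesis using r(1) unfolding height_expansion_def by blast
qed

lemma canon_height_spec_if_height_expansion:
  assumes "height_expansion X c F"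
  shows "(\<exists>T::real. \<forall>t::rat. \<bar>real_of_rat t\<bar> > T \<longrightarrow>
           summable (\<lambda>n. real_of_rat (fps_nth F n) * (1 / real_of_rat t) ^ n) \<and>
           canon_height_spec t (X t) = c * weil_height t + fps_eval_real F (1 / real_of_rat t))"
proof -
  obtain r T where r: "r > 0" "\<And>x. \<bar>x\<bar> < r \<Longrightarrow> summable (\<lambda>n. real_of_rat (fps_nth F n) * x ^ n)"
    and T: "\<And>t. \<bar>real_of_rat t\<bar> > T \<Longrightarrow> (\<lambda>N. weil_height ((f_spec t ^^ N) (X t)) / 2 ^ N)
              \<longlonglongrightarrow> c * weil_height t + fps_eval_real F (1 / real_of_rat t)"
    using assms unfolding height_expansion_def by blast
  have "summable (\<lambda>n. real_of_rat (fps_nth F n) * (1 / real_of_rat t) ^ n) \<and>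
        canon_height_spec t (X t) = c * weil_height t + fps_eval_real F (1 / real_of_rat t)"
    if t: "\<bar>real_of_rat t\<bar> > max T (1 / r)" for t
  proof
    have "\<bar>1 / real_of_rat t\<bar> < r" using t r(1) by (intro abs_one_div_less) auto
    then show "summable (\<lambda>n. real_of_rat (fps_nth F n) * (1 / real_of_rat t) ^ n)" by (rule r(2))
    show "canon_height_spec t (X t) = c * weil_height t + fps_eval_real F (1 / real_of_rat t)"
      unfolding canon_height_spec_def using T t by (intro limI) simp
  qed
  then show ?thesis by blast
qed

theorem theorem2:
  fixes P :: "int poly"
  assumes "lead_coeff P = 1"
  shows "\<exists>F :: rat fps.
           fps_nth F 0 = 0 \<and>
           (\<exists>r > 0. \<forall>x::real. \<bar>x\<bar> < r \<longrightarrow>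
               summable (\<lambda>n. real_of_rat (fps_nth F n) * x ^ n)) \<and>
           (\<exists>T::real. \<forall>t::rat. \<bar>real_of_rat t\<bar> > T \<longrightarrow>
               summable (\<lambda>n. real_of_rat (fps_nth F n) * (1 / real_of_rat t) ^ n) \<and>
               canon_height_spec t (poly (map_poly rat_of_int P) t)
                 = canon_height_ff (map_poly rat_of_int P) * weil_height t
                   + fps_eval_real F (1 / real_of_rat t))"
proof -
  define P' where "P' = map_poly rat_of_int P"
  have "\<exists>F. height_expansion (poly P') (canon_height_ff P') F"
  proof (cases "degree P = 0")
    case True
    then have "P = [:lead_coeff P:]" by (metis degree_0_id)
    then have "P' = 1" using assms by (simp add: P'_def pCons_one)
    have "(\<lambda>t. f_spec t (poly 1 t)) = poly (map_poly rat_of_int [:1, 1:])"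
      by (simp add: fun_eq_iff f_spec_def map_poly_pCons)
    then obtain F where "height_expansion (\<lambda>t. f_spec t (poly 1 t)) 1 F"
      using height_expansion_monic_poly[of "[:1, 1:]"] by simp blast
    then have "height_expansion (poly 1) (1 / 2) (Abs_fps (\<lambda>n. fps_nth F n / 2))"
      using height_expansion_f_spec[where c = 1] by simp
    then show ?thesis unfolding \<open>P' = 1\<close> canon_height_ff_1 by blast
  next
    case False
    then have "canon_height_ff P' = degree P"
      using canon_height_ff_eq_degree[of P'] by (simp add: P'_def degree_map_poly)
    then show ?thesis using height_expansion_monic_poly[OF assms] False by (simp add: P'_def)
  qed
  then obtain F where F: "height_expansion (poly P') (canon_height_ff P') F" by blast
  show ?thesis
    using F canon_height_spec_if_height_expansion[OF F] unfolding height_expansion_def P'_def by blast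
qed

end
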